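(* Let $m\ge 2$, let $K\ne\Delta_{[m]}$ be a simplicial complex on $[m]$ and let $i\in[m]$ with $i\in V(K)$ and $i'\in V(K^\vee)$. Then $\mathrm{Bier}(K)$ is a weak suspension with vertex pair $\{i,i'\}$ if and only if $K$ is a weak cone with apex $i$ and $K^\vee$ is a weak cone with apex $i'$.
   Context: A simplicial complex $K$ on $[m]=\{1,\dots,m\}$ is a nonempty family of subsets of $[m]$ closed under taking subsets; $V(K)=\{i:\{i\}\in K\}$. $\Delta_{[m]}=2^{[m]}$. Let $[m']=\{1',\dots,m'\}$ be a disjoint copy of $[m]$, $I'=\{i':i\in I\}$. For $K\ne\Delta_{[m]}$ the Alexander dual $K^\vee$ is the complex on $[m']$ with $J'\in K^\vee$ iff $[m]\setminus J\notin K$. The Bier sphere $\mathrm{Bier}(K)$ is the complex on $[m]\sqcup[m']$ with faces $I\sqcup J'$, $I\in K$, $J'\in K^\vee$, $I\cap J=\varnothing$. A complex $L$ is a weak cone with apex $a\in V(L)$ if $\{a,v\}\in L$ for all $v\in V(L)\setminus\{a\}$. $L$ is a weak suspension with vertex pair $\{a,b\}$ if $a,b\in V(L)$ are distinct, $\{a,b\}\notin L$, and each of $a,b$ forms an edge of $L$ with every vertex of $V(L)\setminus\{a,b\}$. *)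

theory Defs
  imports Main
begin

text \<open>Vertices of [m] are naturals 1..m; the disjoint union [m] with [m'] is
  modelled by the sum type nat + nat, with i as Inl i and i' as Inr i.\<close>

definition simplicial_complex :: "nat \<Rightarrow> nat set set \<Rightarrow> bool" where
  "simplicial_complex m K \<longleftrightarrow> K \<noteq> {} \<and> (\<forall>F\<in>K. F \<subseteq> {1..m}) \<and>
     (\<forall>F\<in>K. \<forall>G. G \<subseteq> F \<longrightarrow> G \<in> K)"

definition full_simplex :: "nat \<Rightarrow> nat set set" where
  "full_simplex m = Pow {1..m}"

definition vertices :: "'a set set \<Rightarrow> 'a set" where
  "vertices L = {v. {v} \<in> L}"

definition alexander_dual :: "nat \<Rightarrow> nat set set \<Rightarrow> (nat + nat) set set" where
  "alexander_dual m K = {Inr ` J | J. J \<subseteq> {1..m} \<and> {1..m} - J \<notin> K}"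

definition bier :: "nat \<Rightarrow> nat set set \<Rightarrow> (nat + nat) set set" where
  "bier m K = {Inl ` I \<union> Inr ` J | I J. I \<in> K \<and> Inr ` J \<in> alexander_dual m K \<and> I \<inter> J = {}}"

definition weak_cone :: "'a set set \<Rightarrow> 'a \<Rightarrow> bool" where
  "weak_cone L a \<longleftrightarrow> a \<in> vertices L \<and> (\<forall>v \<in> vertices L - {a}. {a, v} \<in> L)"

definition weak_suspension :: "'a set set \<Rightarrow> 'a \<Rightarrow> 'a \<Rightarrow> bool" where
  "weak_suspension L a b \<longleftrightarrow> a \<in> vertices L \<and> b \<in> vertices L \<and> a \<noteq> b \<and> {a, b} \<notin> L \<and>
     (\<forall>v \<in> vertices L - {a, b}. {a, v} \<in> L \<and> {b, v} \<in> L)"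

end

theory Submission
  imports Defs
begin

text \<open>A face of the Bier sphere splits uniquely as \<open>I \<union> J'\<close>; since \<open>\<emptyset>\<close> lies in both \<open>K\<close> and
  \<open>K\<^sup>\<or>\<close> (the latter because \<open>K\<close> is not the full simplex), the faces of \<open>Bier(K)\<close> inside \<open>[m]\<close>
  or inside \<open>[m']\<close> are exactly those of \<open>K\<close> resp. \<open>K\<^sup>\<or>\<close>, and a mixed edge \<open>{a, b'}\<close> is a face
  iff \<open>a\<close>, \<open>b'\<close> are vertices and \<open>a \<noteq> b\<close>. Hence \<open>{i, i'}\<close> is never a face, \<open>i\<close> and \<open>i'\<close> are
  joined to every vertex on the other side, and the remaining suspension edges are exactly
  the cone edges of \<open>K\<close> at \<open>i\<close> and of \<open>K\<^sup>\<or>\<close> at \<open>i'\<close>.\<close>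

lemma Inr_image_in_alexander_dual_iff:
  "Inr ` J \<in> alexander_dual m K \<longleftrightarrow> J \<subseteq> {1..m} \<and> {1..m} - J \<notin> K"
  unfolding alexander_dual_def by (auto dest: inj_image_eq_iff[THEN iffD1, rotated, OF _ inj_Inr])

lemma vertices_alexander_dual_Inr:
  "v \<in> vertices (alexander_dual m K) \<Longrightarrow> \<exists>a. v = Inr a"
  unfolding vertices_def alexander_dual_def by (auto simp: image_iff)

lemma Inl_Inr_image_in_bier_iff:
  "Inl ` I \<union> Inr ` J \<in> bier m K \<longleftrightarrow> I \<in> K \<and> Inr ` J \<in> alexander_dual m K \<and> I \<inter> J = {}"
proof -
  have split_unique: "Inl ` I \<union> Inr ` J = Inl ` I' \<union> Inr ` J' \<longleftrightarrow> I = I' \<and> J = J'"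
    for I' J' :: "nat set"
  proof
    assume eq: "Inl ` I \<union> Inr ` J = Inl ` I' \<union> Inr ` J'"
    have "Inl -` (Inl ` I \<union> Inr ` J) = I" "Inr -` (Inl ` I \<union> Inr ` J) = J"
      "Inl -` (Inl ` I' \<union> Inr ` J') = I'" "Inr -` (Inl ` I' \<union> Inr ` J') = J'" by auto
    with eq show "I = I' \<and> J = J'" by metis
  qed simp
  show ?thesis
    unfolding bier_def by (simp only: mem_Collect_eq split_unique) blast
qed

lemma empty_in_simplicial_complex:
  "simplicial_complex m K \<Longrightarrow> {} \<in> K"
  unfolding simplicial_complex_def by blast

lemma empty_in_alexander_dual:
  assumes "simplicial_complex m K" and "K \<noteq> full_simplex m"
  shows "{} \<in> alexander_dual m K"
proof -
  have "{1..m} \<notin> K"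
  proof
    assume "{1..m} \<in> K"
    with assms(1) have "K = Pow {1..m}" unfolding simplicial_complex_def by blast
    with assms(2) show False unfolding full_simplex_def by simp
  qed
  then show ?thesis using Inr_image_in_alexander_dual_iff[of "{}" m K] by simp
qed

context
  fixes m :: nat and K :: "nat set set"
  assumes complex: "simplicial_complex m K" and proper: "K \<noteq> full_simplex m"
begin

lemma Inl_image_in_bier_iff: "Inl ` I \<in> bier m K \<longleftrightarrow> I \<in> K"
  using Inl_Inr_image_in_bier_iff[of I "{}" m K] empty_in_alexander_dual[OF complex proper]
  by simp

lemma Inr_image_in_bier_iff: "Inr ` J \<in> bier m K \<longleftrightarrow> Inr ` J \<in> alexander_dual m K"
  using Inl_Inr_image_in_bier_iff[of "{}" J m K] empty_in_simplicial_complex[OF complex]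
  by simp

lemma mixed_edge_in_bier_iff:
  "{Inl a, Inr b} \<in> bier m K \<longleftrightarrow> {a} \<in> K \<and> {Inr b} \<in> alexander_dual m K \<and> a \<noteq> b"
proof -
  have "{Inl a, Inr b} = Inl ` {a} \<union> Inr ` {b}" by auto
  then show ?thesis using Inl_Inr_image_in_bier_iff[of "{a}" "{b}" m K] by (simp only:) auto
qed

lemma vertices_bier:
  "vertices (bier m K) = Inl ` vertices K \<union> vertices (alexander_dual m K)"
proof (rule set_eqI)
  fix v
  show "v \<in> vertices (bier m K) \<longleftrightarrow> v \<in> Inl ` vertices K \<union> vertices (alexander_dual m K)"
    using Inl_image_in_bier_iff[of "{_}"] Inr_image_in_bier_iff[of "{_}"]
      vertices_alexander_dual_Inr[of v m K]
    by (cases v) (auto simp: vertices_def)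
qed

lemma weak_suspension_bier_iff:
  assumes "i \<in> vertices K" and "Inr i \<in> vertices (alexander_dual m K)"
  shows "weak_suspension (bier m K) (Inl i) (Inr i) \<longleftrightarrow>
           weak_cone K i \<and> weak_cone (alexander_dual m K) (Inr i)"
proof -
  let ?dual = "alexander_dual m K"
  have edge_Inl: "{Inl i, Inl a} \<in> bier m K \<and> {Inr i, Inl a} \<in> bier m K \<longleftrightarrow> {i, a} \<in> K"
    if "a \<in> vertices K - {i}" for a
    using that assms(2) Inl_image_in_bier_iff[of "{i, a}"] mixed_edge_in_bier_iff[of a i]
    by (auto simp: vertices_def insert_commute)
  have edge_Inr: "{Inl i, Inr a} \<in> bier m K \<and> {Inr i, Inr a} \<in> bier m K \<longleftrightarrow>
      {Inr i, Inr a} \<in> ?dual"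
    if "Inr a \<in> vertices ?dual - {Inr i}" for a
    using that assms(1) Inr_image_in_bier_iff[of "{i, a}"] mixed_edge_in_bier_iff[of i a]
    by (auto simp: vertices_def)
  have vertex_cases: "(\<forall>v \<in> vertices (bier m K) - {Inl i, Inr i}. P v) \<longleftrightarrow>
      (\<forall>a \<in> vertices K - {i}. P (Inl a)) \<and> (\<forall>a. Inr a \<in> vertices ?dual - {Inr i} \<longrightarrow> P (Inr a))"
    for P
    using vertices_alexander_dual_Inr[of _ m K] by (auto simp: vertices_bier)
  have "{Inl i, Inr i} \<notin> bier m K"
    using mixed_edge_in_bier_iff by simp
  moreover have "Inl i \<in> vertices (bier m K)" "Inr i \<in> vertices (bier m K)"
    using assms by (auto simp: vertices_bier)
  ultimately have "weak_suspension (bier m K) (Inl i) (Inr i) \<longleftrightarrow>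
      (\<forall>a \<in> vertices K - {i}. {i, a} \<in> K) \<and>
      (\<forall>a. Inr a \<in> vertices ?dual - {Inr i} \<longrightarrow> {Inr i, Inr a} \<in> ?dual)"
    unfolding weak_suspension_def vertex_cases using edge_Inl edge_Inr by auto
  moreover have "weak_cone ?dual (Inr i) \<longleftrightarrow>
      (\<forall>a. Inr a \<in> vertices ?dual - {Inr i} \<longrightarrow> {Inr i, Inr a} \<in> ?dual)"
    unfolding weak_cone_def using assms(2) vertices_alexander_dual_Inr[of _ m K] by blast
  ultimately show ?thesis
    unfolding weak_cone_def using assms(1) by blast
qed

end

theorem mainTheorem4:
  fixes m i :: nat and K :: "nat set set"
  assumes "m \<ge> 2"
    and "simplicial_complex m K"
    and "K \<noteq> full_simplex m"
    and "i \<in> {1..m}"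
    and "i \<in> vertices K"
    and "Inr i \<in> vertices (alexander_dual m K)"
  shows "weak_suspension (bier m K) (Inl i) (Inr i) \<longleftrightarrow>
           weak_cone K i \<and> weak_cone (alexander_dual m K) (Inr i)"
  using weak_suspension_bier_iff[OF assms(2,3,5,6)] .

end
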